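(* Let $Q$ be a prime and $\lambda\in\mathbb{N}$ a statistical security parameter. Let $E_1,\dots,E_m$ be encryption functions of an additively homomorphic encryption scheme under $m$ keys of Alice with plaintext moduli $q_1,\dots,q_m$ (pairwise coprime), supporting homomorphic addition of ciphertexts and multiplication of a ciphertext by a plaintext constant modulo $q_i$. If $m=1$ then $q_1=Q$; if $m>1$ then $Q'=\prod_{i=1}^m q_i > Q^2 2^\lambda$. Consider the protocol: Alice picks $s_A\in\mathbb{F}_Q$ uniformly and sends $c_i=E_i(s_A\bmod q_i)$ for $1\le i\le m$. Bob picks $s_B\in\mathbb{F}_Q$ and $r_B\in\mathbb{F}_Q^*$ uniformly, and $u$ uniformly in $\{0,\dots,2^\lambda-1\}$ if $m>1$ (else $u=0$), and returns $d_i=(c_i+E_i(s_B))\cdot((r_B^{-1}\bmod Q)\bmod q_i)+E_i(uQ\bmod q_i)$. Alice decrypts all $d_i$, recovers (by the Chinese Remainder Theorem if $m>1$) the value $v\in\mathbb{Z}_{Q'}$ (with $Q'=Q$ if $m=1$), and sets $r_A=v\bmod Q$. Then the protocol is correct: $r_Ar_B=s_A+s_B$ in $\mathbb{F}_Q$.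
   Context: Elements of $\mathbb{F}_Q$ are represented by integers in $\{0,\dots,Q-1\}$; $r_B^{-1}\bmod Q$ is the inverse of $r_B$ in $\mathbb{F}_Q$; $\mathbb{F}_Q^*=\mathbb{F}_Q\setminus\{0\}$. Operations on ciphertexts $E_i(\cdot)$ denote the corresponding homomorphic operations, so $d_i$ decrypts to $((s_A+s_B)(r_B^{-1}\bmod Q)+uQ)\bmod q_i$. *)

theory Defs
  imports "HOL-Number_Theory.Number_Theory"
begin

text \<open>Homomorphic operations of the additively homomorphic scheme are modelled abstractly:
  Enc i x encrypts plaintext x under Alice's i-th key, Dec i decrypts,
  hadd i adds two ciphertexts, hmul i c k multiplies ciphertext c by plaintext constant k;
  all with plaintext modulus q i.\<close>

end

theory Submission
  imports Defs
begin

text \<open>Let \<open>w = (s\<^sub>A + s\<^sub>B) r\<^sub>B\<^sup>-\<^sup>1 + u Q\<close>, with the inverse taken as an integer in \<open>[0, Q)\<close>.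
  Homomorphic evaluation makes every \<open>d\<^sub>i\<close> decrypt to \<open>w mod q\<^sub>i\<close>. For \<open>m = 1\<close> this is
  already \<open>w mod Q\<close>. For \<open>m > 1\<close>, \<open>0 \<le> w < Q\<^sup>2 2\<^sup>\<lambda> < Q'\<close>, so the Chinese Remainder Theorem
  recovers \<open>w\<close> itself. Either way \<open>r\<^sub>A = w mod Q\<close>, and the mask \<open>u Q\<close> vanishes modulo \<open>Q\<close>,
  leaving \<open>r\<^sub>A r\<^sub>B \<equiv> s\<^sub>A + s\<^sub>B\<close>.\<close>

lemma homomorphic_response_decrypts:
  fixes Enc :: "int \<Rightarrow> 'c" and Dec :: "'c \<Rightarrow> int"
  assumes "\<And>x. Dec (Enc x) = x mod n"
    and "\<And>c c'. Dec (hadd c c') = (Dec c + Dec c') mod n"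
    and "\<And>c k. Dec (hmul c k) = (Dec c * k) mod n"
  shows "Dec (hadd (hmul (hadd (Enc (a mod n)) (Enc b)) (k mod n)) (Enc (t mod n)))
           = ((a + b) * k + t) mod n"
  by (simp add: assms mod_simps)

lemma masked_sum_bounds:
  fixes s s' k u Q L :: int
  assumes "s \<in> {0..<Q}" "s' \<in> {0..<Q}" "k \<in> {0..<Q}" "u \<in> {0..<L}" "L \<ge> 2"
  shows "0 \<le> (s + s') * k + u * Q" and "(s + s') * k + u * Q < Q\<^sup>2 * L"
proof -
  show "0 \<le> (s + s') * k + u * Q"
    using assms by auto
  have "(s + s') * k \<le> (2 * Q - 2) * (Q - 1)"
    using assms by (intro mult_mono) auto
  moreover have "u * Q \<le> (L - 1) * Q"
    using assms by (intro mult_right_mono) auto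
  moreover have "0 \<le> (L - 2) * (Q * (Q - 1))"
    using assms by simp
  ultimately show "(s + s') * k + u * Q < Q\<^sup>2 * L"
    using assms by (simp add: algebra_simps power2_eq_square)
qed

lemma cong_unmask:
  fixes r k s u Q :: int
  assumes "[r * k = 1] (mod Q)"
  shows "[((s * k + u * Q) mod Q) * r = s] (mod Q)"
proof -
  have "[((s * k + u * Q) mod Q) * r = s * (r * k)] (mod Q)"
    by (simp add: cong_def mod_simps algebra_simps)
  also have "[s * (r * k) = s * 1] (mod Q)"
    using assms by (rule cong_scalar_left)
  finally show ?thesis by simp
qed

theorem proposition1:
  fixes Q :: int and lam :: nat and m :: nat and q :: "nat \<Rightarrow> int"
    and Enc :: "nat \<Rightarrow> int \<Rightarrow> 'c" and Dec :: "nat \<Rightarrow> 'c \<Rightarrow> int"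
    and hadd :: "nat \<Rightarrow> 'c \<Rightarrow> 'c \<Rightarrow> 'c" and hmul :: "nat \<Rightarrow> 'c \<Rightarrow> int \<Rightarrow> 'c"
    and sA sB rB u v :: int
  assumes Q_prime: "prime Q"
    and lam_pos: "lam \<ge> 1"
    and m_pos: "m \<ge> 1"
    and q_gt1: "\<And>i. i \<in> {1..m} \<Longrightarrow> q i > 1"
    and q_coprime: "\<And>i j. i \<in> {1..m} \<Longrightarrow> j \<in> {1..m} \<Longrightarrow> i \<noteq> j \<Longrightarrow> coprime (q i) (q j)"
    and m1: "m = 1 \<Longrightarrow> q 1 = Q"
    and mgt1: "m > 1 \<Longrightarrow> (\<Prod>i\<in>{1..m}. q i) > Q^2 * 2^lam"
    and Dec_Enc: "\<And>i x. i \<in> {1..m} \<Longrightarrow> Dec i (Enc i x) = x mod q i"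
    and Dec_hadd: "\<And>i c c'. i \<in> {1..m} \<Longrightarrow> Dec i (hadd i c c') = (Dec i c + Dec i c') mod q i"
    and Dec_hmul: "\<And>i c k. i \<in> {1..m} \<Longrightarrow> Dec i (hmul i c k) = (Dec i c * k) mod q i"
    and sA_range: "sA \<in> {0..<Q}"
    and sB_range: "sB \<in> {0..<Q}"
    and rB_range: "rB \<in> {1..<Q}"
    and u_range: "if m > 1 then u \<in> {0..<2^lam} else u = 0"
    and v_range: "v \<in> {0..<(\<Prod>i\<in>{1..m}. q i)}"
    and v_crt: "\<And>i. i \<in> {1..m} \<Longrightarrow>
        v mod q i = Dec i (hadd i (hmul i (hadd i (Enc i (sA mod q i)) (Enc i sB))
                                           ((modular_inverse Q rB) mod q i))
                                 (Enc i ((u * Q) mod q i)))"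
  shows "[(v mod Q) * rB = sA + sB] (mod Q)"
proof -
  define w where "w = (sA + sB) * modular_inverse Q rB + u * Q"
  have "coprime rB Q"
    using rB_range Q_prime by (simp add: prime_imp_coprime_int coprime_commute zdvd_not_zless)
  then have inverse: "[rB * modular_inverse Q rB = 1] (mod Q)"
    by (rule cong_modular_inverse1)
  have v_cong_w: "[v = w] (mod q i)" if "i \<in> {1..m}" for i
  proof -
    have "v mod q i = w mod q i"
      unfolding v_crt[OF that] w_def
      by (rule homomorphic_response_decrypts[OF Dec_Enc Dec_hadd Dec_hmul, OF that that that])
    then show ?thesis by (simp add: cong_def)
  qed
  have "v mod Q = w mod Q"
  proof (cases "m = 1")
    case True
    then show ?thesis using v_cong_w[of 1] m1 by (simp add: cong_def)
  next
    case False
    then have "m > 1" using m_pos by simp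
    have "modular_inverse Q rB \<in> {0..<Q}"
      using Q_prime by (simp add: prime_gt_0_int modular_inverse_int_nonneg modular_inverse_int_less)
    moreover have "u \<in> {0..<2 ^ lam}"
      using u_range \<open>m > 1\<close> by simp
    moreover have "(2::int) \<le> 2 ^ lam"
      using lam_pos by (metis one_le_numeral power_increasing power_one_right)
    ultimately have "0 \<le> w" and "w < Q\<^sup>2 * 2 ^ lam"
      unfolding w_def using masked_sum_bounds sA_range sB_range by blast+
    moreover have "[v = w] (mod (\<Prod>i\<in>{1..m}. q i))"
      by (rule cong_cong_prod_coprime) (use v_cong_w q_coprime in auto)
    ultimately have "v = w"
      using v_range mgt1[OF \<open>m > 1\<close>] cong_less_imp_eq_int[of v _ w] by force
    then show ?thesis by simp
  qed
  moreover have "[(w mod Q) * rB = sA + sB] (mod Q)"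
    unfolding w_def using inverse by (rule cong_unmask)
  ultimately show ?thesis by simp
qed

end
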